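(* Let $R$ be a commutative elementary divisor domain, let $S\in GL_n(R)$, and let $\Phi=\mathrm{diag}(\varphi_1,\dots,\varphi_n)$ be a nonsingular $n\times n$ $d$-matrix. The group $\mathbf G_\Phi$ contains a matrix $H$ such that $HS$ is a lower unitriangular matrix if and only if $$\Big(\frac{\varphi_{i+1}}{\varphi_i},\ \det S_{(i+1)}\Big)=1\quad\text{for } i=1,\dots,n-1,$$ where $S_{(i)}$ denotes the submatrix of $S$ formed by rows $i,\dots,n$ and columns $i,\dots,n$.
   Context: An elementary divisor ring is a ring over which every matrix is equivalent (i.e. $PAQ$ with $P,Q$ invertible) to a $d$-matrix, a diagonal matrix $\mathrm{diag}(\varphi_1,\dots)$ with $\varphi_i\mid\varphi_{i+1}$; such commutative domains are Bezout domains (every finitely generated ideal principal). For an $n\times n$ $d$-matrix $\Phi$, $\mathbf G_\Phi=\{H\in GL_n(R):\ \exists K\in GL_n(R),\ H\Phi=\Phi K\}$. A lower unitriangular matrix is a lower triangular matrix with all diagonal entries equal to $1$. *)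

theory Defs
  imports "Jordan_Normal_Form.Determinant"
begin

text \<open>Matrices are Jordan_Normal_Form matrices; indices are 0-based.\<close>

definition GL :: "nat \<Rightarrow> 'a :: comm_ring_1 mat set" where
  "GL n = {A. A \<in> carrier_mat n n \<and> invertible_mat A}"

definition is_d_matrix :: "'a :: comm_ring_1 mat \<Rightarrow> bool" where
  "is_d_matrix D \<longleftrightarrow>
     (\<forall>i j. i < dim_row D \<longrightarrow> j < dim_col D \<longrightarrow> i \<noteq> j \<longrightarrow> D $$ (i, j) = 0) \<and>
     (\<forall>i. Suc i < min (dim_row D) (dim_col D) \<longrightarrow> D $$ (i, i) dvd D $$ (Suc i, Suc i))"

definition elementary_divisor_ring :: "'a :: comm_ring_1 itself \<Rightarrow> bool" where
  "elementary_divisor_ring TYPE('a) \<longleftrightarrow>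
     (\<forall>m k (A :: 'a mat). A \<in> carrier_mat m k \<longrightarrow>
        (\<exists>P Q. P \<in> GL m \<and> Q \<in> GL k \<and> is_d_matrix (P * A * Q)))"

definition G_Phi :: "'a :: comm_ring_1 mat \<Rightarrow> 'a mat set" where
  "G_Phi Phi = {H \<in> GL (dim_row Phi). \<exists>K \<in> GL (dim_row Phi). H * Phi = Phi * K}"

definition lower_unitriangular :: "'a :: comm_ring_1 mat \<Rightarrow> bool" where
  "lower_unitriangular L \<longleftrightarrow> square_mat L \<and>
     (\<forall>i < dim_row L. L $$ (i, i) = 1) \<and>
     (\<forall>i j. i < j \<longrightarrow> j < dim_row L \<longrightarrow> L $$ (i, j) = 0)"

text \<open>Trailing principal submatrix: rows and columns k,...,n-1 (0-based).
  Paper's S_(i) (1-based) is trailing_submat S (i-1).\<close>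
definition trailing_submat :: "'a mat \<Rightarrow> nat \<Rightarrow> 'a mat" where
  "trailing_submat S k = mat (dim_row S - k) (dim_col S - k) (\<lambda>(a, b). S $$ (a + k, b + k))"

text \<open>Exact quotient a / b in a domain (meaningful when b divides a, b nonzero).\<close>
definition exact_quot :: "'a :: idom \<Rightarrow> 'a \<Rightarrow> 'a" where
  "exact_quot a b = (THE c. a = b * c)"

definition gcd_one :: "'a :: comm_ring_1 \<Rightarrow> 'a \<Rightarrow> bool" where
  "gcd_one a b \<longleftrightarrow> (\<forall>c. c dvd a \<longrightarrow> c dvd b \<longrightarrow> c dvd 1)"

end

theory Submission
  imports Defs
begin

text \<open>Write \<open>\<phi>\<^sub>i\<close> for the diagonal entries of \<open>Phi\<close> and \<open>q\<^sub>i = \<phi>\<^sub>i\<^sub>+\<^sub>1 / \<phi>\<^sub>i\<close>. Since \<open>Phi\<close> is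
  nonsingular, an invertible \<open>H\<close> lies in \<open>G_Phi\<close> iff \<open>\<phi>\<^sub>a\<close> divides \<open>H\<^sub>a\<^sub>b \<phi>\<^sub>b\<close> for all \<open>a, b\<close>; in
  particular \<open>q\<^sub>i\<close> divides every entry of \<open>H\<close> in rows \<open>> i\<close> and columns \<open>\<le> i\<close>.

  Necessity: modulo \<open>q\<^sub>i\<close> the trailing block of the unitriangular matrix \<open>H S\<close> is then the
  product of the trailing blocks of \<open>H\<close> and \<open>S\<close>, so \<open>det S_(i+1)\<close> is a unit modulo \<open>q\<^sub>i\<close>.

  Sufficiency: it is enough to find a lower unitriangular \<open>M\<close> with \<open>S M \<in> G_Phi\<close>, for then
  \<open>H = (S M)\<^sup>-\<^sup>1\<close> works. The columns of \<open>M\<close> are built from the last one downwards: a Bezout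
  relation between \<open>q\<^sub>i\<close> and \<open>det S_(i+1)\<close> (an elementary divisor domain is a Bezout domain),
  together with the adjugate of \<open>S_(i+1)\<close>, makes column \<open>i\<close> of \<open>S M\<close> divisible by \<open>q\<^sub>i\<close> below the
  diagonal.\<close>

lemma exact_quot_mult:
  fixes a b :: "'a::idom"
  assumes "b \<noteq> 0" "b dvd a"
  shows "b * exact_quot a b = a"
proof -
  obtain c where c: "a = b * c" using assms(2) by auto
  have "exact_quot a b = c" unfolding exact_quot_def
    by (rule the_equality) (use c assms(1) in auto)
  then show ?thesis using c by simp
qed

lemma gcd_one_if_dvd_one_diff:
  assumes "p dvd 1 - x * y"
  shows "gcd_one p y"
  unfolding gcd_one_def
proof (intro allI impI)
  fix c assume "c dvd p" "c dvd y"
  then have "c dvd (1 - x * y) + x * y" using assms by (meson dvd_add dvd_mult dvd_trans)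
  then show "c dvd 1" by simp
qed

lemma GL_carrier: "A \<in> GL n \<Longrightarrow> A \<in> carrier_mat n n"
  by (simp add: GL_def)

lemma GL_inverse:
  assumes "A \<in> GL n"
  obtains B where "B \<in> carrier_mat n n" "A * B = 1\<^sub>m n" "B * A = 1\<^sub>m n"
proof -
  from assms have A: "A \<in> carrier_mat n n" and inv: "invertible_mat A" by (auto simp: GL_def)
  then obtain B where 1: "A * B = 1\<^sub>m n" and 2: "B * A = 1\<^sub>m (dim_row B)"
    unfolding invertible_mat_def inverts_mat_def by auto
  have "dim_col B = n" using arg_cong[OF 1, of dim_col] by simp
  moreover have "dim_row B = n" using arg_cong[OF 2, of dim_col] A by simp
  ultimately show ?thesis using 1 2 that by auto
qed

lemma GL_I:
  assumes "A \<in> carrier_mat n n" "B \<in> carrier_mat n n" "A * B = 1\<^sub>m n" "B * A = 1\<^sub>m n"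
  shows "A \<in> GL n"
  using assms unfolding GL_def invertible_mat_def inverts_mat_def by auto

lemma GL_if_det_unit:
  fixes A :: "'a::comm_ring_1 mat"
  assumes A: "A \<in> carrier_mat n n" and e: "det A * e = 1"
  shows "A \<in> GL n"
proof (rule GL_I[OF A])
  note adj = adj_mat[OF A]
  have e1: "e \<cdot>\<^sub>m (det A \<cdot>\<^sub>m 1\<^sub>m n) = 1\<^sub>m n"
    by (rule eq_matI) (use e in \<open>auto simp: mult.commute\<close>)
  show "e \<cdot>\<^sub>m adj_mat A \<in> carrier_mat n n" using adj by simp
  show "A * (e \<cdot>\<^sub>m adj_mat A) = 1\<^sub>m n" using A adj e1 by (simp add: mult_smult_distrib)
  show "(e \<cdot>\<^sub>m adj_mat A) * A = 1\<^sub>m n" using A adj e1 by (simp add: mult_smult_assoc_mat)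
qed

lemma det_GL_unit:
  assumes "A \<in> GL n"
  obtains e where "det A * e = 1"
proof -
  obtain B where B: "B \<in> carrier_mat n n" "A * B = 1\<^sub>m n" using assms by (rule GL_inverse)
  have "det A * det B = 1" using det_mult[OF GL_carrier[OF assms] B(1)] B(2) by simp
  then show ?thesis using that by blast
qed

lemma GL_mult:
  assumes A: "A \<in> GL n" and B: "B \<in> GL n"
  shows "A * B \<in> GL n"
proof -
  obtain a where a: "det A * a = 1" using A by (rule det_GL_unit)
  obtain b where b: "det B * b = 1" using B by (rule det_GL_unit)
  have "det (A * B) * (a * b) = (det A * a) * (det B * b)"
    unfolding det_mult[OF GL_carrier[OF A] GL_carrier[OF B]] by (simp only: ac_simps)
  also have "\<dots> = 1" using a b by simp
  finally show ?thesis by (rule GL_if_det_unit[OF mult_carrier_mat[OF GL_carrier[OF A] GL_carrier[OF B]]])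
qed

lemma mult_mat_inverses_one:
  fixes A B A' B' :: "'a::semiring_1 mat"
  assumes A: "A \<in> carrier_mat n n" and B: "B \<in> carrier_mat n n"
    and A': "A' \<in> carrier_mat n n" and B': "B' \<in> carrier_mat n n"
    and "A * A' = 1\<^sub>m n" and "B * B' = 1\<^sub>m n"
  shows "(A * B) * (B' * A') = 1\<^sub>m n"
proof -
  have "(A * B) * (B' * A') = A * ((B * B') * A')"
    using assoc_mult_mat[OF A B mult_carrier_mat[OF B' A']] assoc_mult_mat[OF B B' A'] by simp
  also have "\<dots> = 1\<^sub>m n" using assms by simp
  finally show ?thesis .
qed

lemma prod_dvd_diff:
  fixes p :: "'a::comm_ring_1"
  assumes "\<forall>i\<in>I. p dvd x i - y i"
  shows "p dvd prod x I - prod y I"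
  using assms
proof (induction I rule: infinite_finite_induct)
  case (insert a F)
  have "prod x (insert a F) - prod y (insert a F) = x a * (prod x F - prod y F) + (x a - y a) * prod y F"
    using insert(1,2) by (simp add: algebra_simps)
  then show ?case using insert by simp
qed auto

lemma det_dvd_diff:
  fixes p :: "'a::comm_ring_1"
  assumes A: "A \<in> carrier_mat m m" and B: "B \<in> carrier_mat m m"
    and entries: "\<And>i j. i < m \<Longrightarrow> j < m \<Longrightarrow> p dvd A $$ (i,j) - B $$ (i,j)"
  shows "p dvd det A - det B"
proof -
  have "det A - det B = (\<Sum>s | s permutes {0..<m}. signof s *
      ((\<Prod>i=0..<m. A $$ (i, s i)) - (\<Prod>i=0..<m. B $$ (i, s i))))"
    unfolding det_def'[OF A] det_def'[OF B] by (simp add: sum_subtractf right_diff_distrib)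
  also have "p dvd \<dots>"
  proof (rule dvd_sum)
    fix s assume "s \<in> {s. s permutes {0..<m}}"
    then have "\<forall>i\<in>{0..<m}. s i < m" using permutes_in_image by fastforce
    then show "p dvd signof s * ((\<Prod>i=0..<m. A $$ (i, s i)) - (\<Prod>i=0..<m. B $$ (i, s i)))"
      using entries by (intro dvd_mult prod_dvd_diff) auto
  qed
  finally show ?thesis .
qed

lemma diagonal_mult_index:
  fixes X D :: "'a::comm_ring_1 mat"
  assumes X: "X \<in> carrier_mat n n" and D: "D \<in> carrier_mat n n" "diagonal_mat D"
    and a: "a < n" and b: "b < n"
  shows "(X * D) $$ (a,b) = X $$ (a,b) * D $$ (b,b)"
    and "(D * X) $$ (a,b) = D $$ (a,a) * X $$ (a,b)"
proof -
  have off: "D $$ (i,j) = 0" if "i < n" "j < n" "i \<noteq> j" for i j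
    using D that unfolding diagonal_mat_def by auto
  have "(X * D) $$ (a,b) = (\<Sum>j\<in>{0..<n}. X $$ (a,j) * D $$ (j,b))"
    using X D a b by (simp add: scalar_prod_def)
  also have "\<dots> = (\<Sum>j\<in>{b}. X $$ (a,j) * D $$ (j,b))"
    by (rule sum.mono_neutral_right) (use off b in auto)
  finally show "(X * D) $$ (a,b) = X $$ (a,b) * D $$ (b,b)" by simp
  have "(D * X) $$ (a,b) = (\<Sum>j\<in>{0..<n}. D $$ (a,j) * X $$ (j,b))"
    using X D a b by (simp add: scalar_prod_def)
  also have "\<dots> = (\<Sum>j\<in>{a}. D $$ (a,j) * X $$ (j,b))"
    by (rule sum.mono_neutral_right) (use off a in auto)
  finally show "(D * X) $$ (a,b) = D $$ (a,a) * X $$ (a,b)" by simp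
qed

lemma diagonal_index_nonzero:
  fixes D :: "'a::idom mat"
  assumes D: "D \<in> carrier_mat n n" "diagonal_mat D" and "det D \<noteq> 0" and i: "i < n"
  shows "D $$ (i,i) \<noteq> 0"
proof -
  have "det D = prod_list (diag_mat D)"
    by (rule det_lower_triangular[OF _ D(1)]) (use D in \<open>auto simp: diagonal_mat_def\<close>)
  moreover have "D $$ (i,i) \<in> set (diag_mat D)" using i D(1) by (auto simp: diag_mat_def)
  ultimately show ?thesis using \<open>det D \<noteq> 0\<close> by auto
qed

lemma is_d_matrix_diagonal: "is_d_matrix D \<Longrightarrow> diagonal_mat D"
  unfolding is_d_matrix_def diagonal_mat_def by simp

lemma is_d_matrix_index_dvd:
  assumes D: "is_d_matrix D" and "i \<le> j" and j: "j < min (dim_row D) (dim_col D)"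
  shows "D $$ (i,i) dvd D $$ (j,j)"
  using \<open>i \<le> j\<close> j
proof (induction j rule: dec_induct)
  case (step j)
  have "D $$ (j,j) dvd D $$ (Suc j, Suc j)" using D step.prems unfolding is_d_matrix_def by simp
  then show ?case using step.IH step.prems by (auto intro: dvd_trans)
qed simp

lemma lower_unitriangular_carrier:
  "lower_unitriangular L \<Longrightarrow> L \<in> carrier_mat (dim_row L) (dim_row L)"
  unfolding lower_unitriangular_def by auto

lemma det_lower_unitriangular:
  assumes "lower_unitriangular L"
  shows "det L = 1"
proof -
  have "det L = prod_list (diag_mat L)"
    using assms by (intro det_lower_triangular[OF _ lower_unitriangular_carrier[OF assms]])
      (auto simp: lower_unitriangular_def)
  also have "diag_mat L = map (\<lambda>_. 1) [0..<dim_row L]"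
    using assms unfolding diag_mat_def lower_unitriangular_def by (intro map_cong) auto
  finally show ?thesis by (simp add: map_replicate_const)
qed

lemma lower_unitriangular_inverse:
  fixes M N :: "'a::comm_ring_1 mat"
  assumes M: "lower_unitriangular M" "M \<in> carrier_mat n n" and N: "N \<in> carrier_mat n n"
    and MN: "M * N = 1\<^sub>m n"
  shows "lower_unitriangular N"
proof -
  have M1: "M $$ (i,i) = 1" if "i < n" for i using M that unfolding lower_unitriangular_def by simp
  have M0: "M $$ (i,j) = 0" if "i < j" "j < n" for i j using M that unfolding lower_unitriangular_def by simp
  have "N $$ (a,b) = (if a = b then 1 else 0)" if "a \<le> b" "b < n" for a b
    using that
  proof (induction a rule: less_induct)
    case (less a)
    have a: "a < n" using less.prems by simp
    have "(M * N) $$ (a,b) = (\<Sum>j\<in>{0..<n}. M $$ (a,j) * N $$ (j,b))"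
      using M N a less.prems by (simp add: scalar_prod_def)
    also have "\<dots> = (\<Sum>j\<in>{a}. M $$ (a,j) * N $$ (j,b))"
    proof (rule sum.mono_neutral_right)
      show "\<forall>j\<in>{0..<n} - {a}. M $$ (a,j) * N $$ (j,b) = 0"
      proof
        fix j assume j: "j \<in> {0..<n} - {a}"
        show "M $$ (a,j) * N $$ (j,b) = 0"
        proof (cases "j < a")
          case True
          then have "N $$ (j,b) = 0" using less.IH[of j] less.prems by simp
          then show ?thesis by simp
        next
          case False
          then show ?thesis using M0[of a j] j by simp
        qed
      qed
    qed (use a in auto)
    finally show ?case using MN M1 a less.prems by simp
  qed
  then show ?thesis using N unfolding lower_unitriangular_def by auto
qed

lemma lower_unitriangular_GL:
  assumes "lower_unitriangular M" "M \<in> carrier_mat n n"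
  shows "M \<in> GL n"
  using GL_if_det_unit[OF assms(2)] det_lower_unitriangular[OF assms(1)] by simp

lemma trailing_submat_carrier:
  "S \<in> carrier_mat n n \<Longrightarrow> trailing_submat S k \<in> carrier_mat (n-k) (n-k)"
  unfolding trailing_submat_def by auto

lemma trailing_submat_index [simp]:
  "a < dim_row S - k \<Longrightarrow> b < dim_col S - k \<Longrightarrow> trailing_submat S k $$ (a,b) = S $$ (a+k, b+k)"
  unfolding trailing_submat_def by auto

lemma lower_unitriangular_trailing_submat:
  assumes "lower_unitriangular L"
  shows "lower_unitriangular (trailing_submat L k)"
proof -
  have "dim_col L = dim_row L" using assms unfolding lower_unitriangular_def by simp
  then show ?thesis using assms unfolding lower_unitriangular_def
    by (simp add: trailing_submat_def)
qed

lemma trailing_submat_mult_index: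
  fixes H S :: "'a::comm_ring_1 mat"
  assumes H: "H \<in> carrier_mat n n" and S: "S \<in> carrier_mat n n" and a: "a < n - k" and b: "b < n - k"
  shows "trailing_submat (H * S) k $$ (a,b)
    = (\<Sum>j<k. H $$ (a+k,j) * S $$ (j,b+k)) + (trailing_submat H k * trailing_submat S k) $$ (a,b)"
proof -
  let ?g = "\<lambda>j. H $$ (a+k,j) * S $$ (j,b+k)"
  have "(trailing_submat H k * trailing_submat S k) $$ (a,b) = (\<Sum>l<n-k. ?g (l+k))"
    using a b trailing_submat_carrier[OF H, of k] trailing_submat_carrier[OF S, of k]
    by (auto simp: scalar_prod_def atLeast0LessThan carrier_matD[OF H] carrier_matD[OF S] intro!: sum.cong)
  also have "\<dots> = sum ?g {k..<n}"
    using sum.shift_bounds_nat_ivl[of ?g 0 k "n-k"] a by (simp add: atLeast0LessThan)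
  finally have "sum ?g {0..<n} = sum ?g {0..<k} + (trailing_submat H k * trailing_submat S k) $$ (a,b)"
    using sum.atLeastLessThan_concat[of 0 k n ?g] a by simp
  moreover have "trailing_submat (H * S) k $$ (a,b) = sum ?g {0..<n}"
    using a b H S by (simp add: scalar_prod_def)
  ultimately show ?thesis by (simp add: atLeast0LessThan)
qed

lemma trailing_submat_mult_vec:
  fixes S :: "'a::comm_ring_1 mat"
  assumes S: "S \<in> carrier_mat n n" and w: "w \<in> carrier_vec (n-k)" and a: "k \<le> a" "a < n"
  shows "(\<Sum>j\<in>{k..<n}. S $$ (a,j) * w $ (j-k)) = (trailing_submat S k *\<^sub>v w) $ (a-k)"
proof -
  have "(trailing_submat S k *\<^sub>v w) $ (a-k) = (\<Sum>l\<in>{0..<n-k}. S $$ (a, l+k) * w $ l)"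
    using trailing_submat_carrier[OF S, of k] w a by (auto simp: scalar_prod_def carrier_matD[OF S] intro!: sum.cong)
  also have "\<dots> = (\<Sum>j\<in>{k..<n}. S $$ (a,j) * w $ (j-k))"
    using sum.shift_bounds_nat_ivl[of "\<lambda>j. S $$ (a,j) * w $ (j-k)" 0 k "n-k"] a by simp
  finally show ?thesis by simp
qed

subsection \<open>The group \<open>G_Phi\<close> of a nonsingular diagonal matrix\<close>

lemma G_Phi_index_dvd:
  fixes Phi :: "'a::comm_ring_1 mat"
  assumes Phi: "Phi \<in> carrier_mat n n" "diagonal_mat Phi" and H: "H \<in> G_Phi Phi"
    and a: "a < n" and b: "b < n"
  shows "Phi $$ (a,a) dvd H $$ (a,b) * Phi $$ (b,b)"
proof -
  obtain K where "K \<in> carrier_mat n n" "H \<in> carrier_mat n n" "H * Phi = Phi * K"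
    using H Phi unfolding G_Phi_def GL_def by auto
  then have "H $$ (a,b) * Phi $$ (b,b) = Phi $$ (a,a) * K $$ (a,b)"
    using diagonal_mult_index[OF _ Phi a b] by metis
  then show ?thesis by simp
qed

text \<open>The matrix \<open>K = Phi\<^sup>-\<^sup>1 H Phi\<close> has entries in the ring by the divisibility hypothesis,
  and it is invertible because \<open>det K = det H\<close>.\<close>

lemma G_PhiI:
  fixes Phi :: "'a::idom mat"
  assumes Phi: "Phi \<in> carrier_mat n n" "diagonal_mat Phi" "det Phi \<noteq> 0" and H: "H \<in> GL n"
    and dvd: "\<And>a b. a < n \<Longrightarrow> b < n \<Longrightarrow> Phi $$ (a,a) dvd H $$ (a,b) * Phi $$ (b,b)"
  shows "H \<in> G_Phi Phi"
proof -
  have Hc: "H \<in> carrier_mat n n" using H by (rule GL_carrier)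
  define K where "K = mat n n (\<lambda>(a,b). exact_quot (H $$ (a,b) * Phi $$ (b,b)) (Phi $$ (a,a)))"
  have Kc: "K \<in> carrier_mat n n" unfolding K_def by simp
  have HK: "H * Phi = Phi * K"
  proof (rule eq_matI)
    fix a b assume "a < dim_row (Phi * K)" "b < dim_col (Phi * K)"
    then have a: "a < n" and b: "b < n" using Phi Kc by auto
    have "Phi $$ (a,a) * K $$ (a,b) = H $$ (a,b) * Phi $$ (b,b)"
      unfolding K_def using a b dvd diagonal_index_nonzero[OF Phi a] by (simp add: exact_quot_mult)
    then show "(H * Phi) $$ (a,b) = (Phi * K) $$ (a,b)"
      using diagonal_mult_index[OF Hc Phi(1,2) a b] diagonal_mult_index[OF Kc Phi(1,2) a b] by simp
  qed (use Hc Kc Phi in auto)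
  have "det Phi * det K = det Phi * det H"
    using det_mult[OF Hc Phi(1)] det_mult[OF Phi(1) Kc] HK by (metis mult.commute)
  then have "det K = det H" using Phi(3) by simp
  moreover obtain e where "det H * e = 1" using H by (rule det_GL_unit)
  ultimately have "K \<in> GL n" using GL_if_det_unit[OF Kc] by simp
  then show ?thesis unfolding G_Phi_def using H HK Phi by auto
qed

lemma G_Phi_inverse:
  assumes Phi: "Phi \<in> carrier_mat n n" and G: "G \<in> G_Phi Phi"
    and H: "H \<in> carrier_mat n n" "G * H = 1\<^sub>m n" "H * G = 1\<^sub>m n"
  shows "H \<in> G_Phi Phi"
proof -
  obtain K where K: "K \<in> GL n" and GK: "G * Phi = Phi * K" and Gc: "G \<in> carrier_mat n n"
    using G Phi unfolding G_Phi_def GL_def by auto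
  obtain K' where K': "K' \<in> carrier_mat n n" "K * K' = 1\<^sub>m n" "K' * K = 1\<^sub>m n"
    using K by (rule GL_inverse)
  have Kc: "K \<in> carrier_mat n n" using K by (rule GL_carrier)
  have "H * Phi = H * Phi * (K * K')" using K' H Phi by simp
  also have "\<dots> = H * (Phi * K) * K'" using H Phi Kc K' by (simp add: assoc_mult_mat[of _ n n _ n _ n])
  also have "\<dots> = (H * G) * Phi * K'" using assoc_mult_mat[OF H(1) Gc Phi] by (simp add: GK)
  also have "\<dots> = Phi * K'" using H Phi by simp
  finally have "H * Phi = Phi * K'" .
  moreover have "H \<in> GL n" "K' \<in> GL n" using GL_I H Gc K' Kc by blast+
  ultimately show ?thesis unfolding G_Phi_def using Phi by auto
qed

subsection \<open>Necessity\<close>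

lemma gcd_one_det_trailing_submat:
  fixes H S :: "'a::comm_ring_1 mat"
  assumes H: "H \<in> carrier_mat n n" and S: "S \<in> carrier_mat n n"
    and L: "lower_unitriangular (H * S)"
    and p: "\<And>a b. k \<le> a \<Longrightarrow> a < n \<Longrightarrow> b < k \<Longrightarrow> p dvd H $$ (a,b)"
  shows "gcd_one p (det (trailing_submat S k))"
proof -
  let ?L = "trailing_submat (H * S) k" and ?H = "trailing_submat H k" and ?S = "trailing_submat S k"
  have "p dvd det ?L - det (?H * ?S)"
  proof (rule det_dvd_diff)
    show "?L \<in> carrier_mat (n-k) (n-k)"
      using trailing_submat_carrier[OF mult_carrier_mat[OF H S]] .
    show "?H * ?S \<in> carrier_mat (n-k) (n-k)"
      using mult_carrier_mat[OF trailing_submat_carrier[OF H] trailing_submat_carrier[OF S]] .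
    fix a b assume ab: "a < n - k" "b < n - k"
    have "p dvd (\<Sum>j<k. H $$ (a+k,j) * S $$ (j,b+k))"
      using ab by (intro dvd_sum dvd_mult2 p) auto
    then show "p dvd ?L $$ (a,b) - (?H * ?S) $$ (a,b)"
      using trailing_submat_mult_index[OF H S ab] by simp
  qed
  moreover have "det ?L = 1" using L by (intro det_lower_unitriangular lower_unitriangular_trailing_submat)
  ultimately have "p dvd 1 - det ?H * det ?S"
    using det_mult trailing_submat_carrier H S by metis
  then show ?thesis by (rule gcd_one_if_dvd_one_diff)
qed

lemma G_Phi_lower_left_dvd:
  fixes Phi :: "'a::idom mat"
  assumes Phi: "Phi \<in> carrier_mat n n" "is_d_matrix Phi" "det Phi \<noteq> 0" and H: "H \<in> G_Phi Phi"
    and i: "Suc i < n" and a: "Suc i \<le> a" "a < n" and b: "b \<le> i"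
  shows "exact_quot (Phi $$ (Suc i, Suc i)) (Phi $$ (i,i)) dvd H $$ (a,b)"
proof -
  have D: "diagonal_mat Phi" using Phi(2) by (rule is_d_matrix_diagonal)
  let ?q = "exact_quot (Phi $$ (Suc i, Suc i)) (Phi $$ (i,i))"
  have dvd: "Phi $$ (x,x) dvd Phi $$ (y,y)" if "x \<le> y" "y < n" for x y
    using is_d_matrix_index_dvd[OF Phi(2) that(1)] that Phi(1) by simp
  obtain s where s: "Phi $$ (i,i) = Phi $$ (b,b) * s" using dvd[of b i] b i by auto
  obtain t where t: "Phi $$ (a,a) = Phi $$ (Suc i, Suc i) * t" using dvd[of "Suc i" a] a by auto
  have "Phi $$ (a,a) = Phi $$ (Suc i, Suc i) * t" by (fact t)
  also have "Phi $$ (Suc i, Suc i) = Phi $$ (i,i) * ?q"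
    using exact_quot_mult[OF diagonal_index_nonzero[OF Phi(1) D Phi(3) Suc_lessD[OF i]] dvd[OF _ i]]
    by simp
  finally have "Phi $$ (a,a) = (s * ?q * t) * Phi $$ (b,b)" using s by (simp add: ac_simps)
  moreover have "Phi $$ (a,a) dvd H $$ (a,b) * Phi $$ (b,b)"
    using G_Phi_index_dvd[OF Phi(1) D H, of a b] a b i by simp
  ultimately have "(s * ?q * t) * Phi $$ (b,b) dvd H $$ (a,b) * Phi $$ (b,b)" by simp
  then have "s * ?q * t dvd H $$ (a,b)"
    using diagonal_index_nonzero[OF Phi(1) D Phi(3)] b i by simp
  then show ?thesis by (meson dvd_mult_left dvd_mult_right dvd_trans)
qed

lemma G_Phi_lower_unitriangular_imp_gcd_one:
  fixes S Phi :: "'a::idom mat"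
  assumes S: "S \<in> carrier_mat n n"
    and Phi: "Phi \<in> carrier_mat n n" "is_d_matrix Phi" "det Phi \<noteq> 0"
    and H: "H \<in> G_Phi Phi" and L: "lower_unitriangular (H * S)" and i: "Suc i < n"
  shows "gcd_one (exact_quot (Phi $$ (Suc i, Suc i)) (Phi $$ (i, i))) (det (trailing_submat S (Suc i)))"
proof (rule gcd_one_det_trailing_submat[OF _ S L])
  show "H \<in> carrier_mat n n" using H Phi unfolding G_Phi_def GL_def by auto
qed (use G_Phi_lower_left_dvd[OF Phi H i] in auto)

subsection \<open>Sufficiency\<close>

lemma edr_bezout:
  fixes a b :: "'a::idom"
  assumes edr: "elementary_divisor_ring TYPE('a)" and g: "gcd_one a b"
  obtains u v where "u * a + v * b = 1"
proof -
  define A :: "'a mat" where "A = mat 1 2 (\<lambda>(i,j). if j = 0 then a else b)"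
  have Ac: "A \<in> carrier_mat 1 2" unfolding A_def by simp
  obtain P Q where P: "P \<in> GL 1" and Q: "Q \<in> GL 2" and D: "is_d_matrix (P * A * Q)"
    using edr Ac unfolding elementary_divisor_ring_def by blast
  obtain P' where P': "P' \<in> carrier_mat 1 1" "P' * P = 1\<^sub>m 1" using P by (rule GL_inverse)
  obtain Q' where Q': "Q' \<in> carrier_mat 2 2" "Q * Q' = 1\<^sub>m 2" using Q by (rule GL_inverse)
  have Pc: "P \<in> carrier_mat 1 1" and Qc: "Q \<in> carrier_mat 2 2" using P Q by (auto simp: GL_def)
  define E where "E = P * A * Q"
  have Ec: "E \<in> carrier_mat 1 2" unfolding E_def using Pc Ac Qc by auto
  have E01: "E $$ (0,1) = 0" using D Ec unfolding E_def[symmetric] is_d_matrix_def by auto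
  have "P' * E * Q' = (P' * P) * A * (Q * Q')"
    unfolding E_def using P'(1) Pc Ac Qc Q'(1)
    by (simp add: assoc_mult_mat[of _ 1 1 _ 1 _ 2] assoc_mult_mat[of _ 1 1 _ 2 _ 2]
        assoc_mult_mat[of _ 1 2 _ 2 _ 2])
  then have AE: "A = P' * E * Q'" using Ac P' Q' by simp
  have "A $$ (0,j) = P' $$ (0,0) * E $$ (0,0) * Q' $$ (0,j)" if "j < 2" for j
    using that P' Q' Ec E01 unfolding AE
    by (simp add: scalar_prod_def eval_nat_numeral atLeast0LessThan lessThan_Suc)
  from this[of 0] this[of 1] have "E $$ (0,0) dvd a" "E $$ (0,0) dvd b" unfolding A_def by simp_all
  then have "E $$ (0,0) dvd 1" using g unfolding gcd_one_def by blast
  then obtain e where e: "1 = E $$ (0,0) * e" by auto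
  have "E $$ (0,0) = P $$ (0,0) * (a * Q $$ (0,0) + b * Q $$ (1,0))"
    unfolding E_def using Pc Qc
    by (simp add: A_def scalar_prod_def eval_nat_numeral atLeast0LessThan lessThan_Suc algebra_simps)
  then have "(e * P $$ (0,0) * Q $$ (0,0)) * a + (e * P $$ (0,0) * Q $$ (1,0)) * b = 1"
    using e by (simp add: algebra_simps)
  then show ?thesis using that by blast
qed

lemma adj_mat_solves:
  fixes A :: "'a::comm_ring_1 mat"
  assumes A: "A \<in> carrier_mat m m" and c: "c \<in> carrier_vec m"
  shows "A *\<^sub>v (adj_mat A *\<^sub>v c) = det A \<cdot>\<^sub>v c"
proof -
  have "A *\<^sub>v (adj_mat A *\<^sub>v c) = (det A \<cdot>\<^sub>m 1\<^sub>m m) *\<^sub>v c"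
    using A adj_mat[OF A] c by (simp flip: assoc_mult_mat_vec)
  also have "\<dots> = det A \<cdot>\<^sub>v c"
    by (rule eq_vecI) (use c in \<open>auto simp: scalar_prod_def if_distrib if_distribR cong: if_cong\<close>)
  finally show ?thesis .
qed

text \<open>Going from column \<open>i + 1\<close> to column \<open>i\<close>: with \<open>u det A + v q i = 1\<close> for the trailing
  block \<open>A\<close> of \<open>S\<close>, subtracting \<open>u\<close> times the adjugate solution of \<open>A x = c\<close> makes the column
  divisible by \<open>q i\<close>; the remaining factor \<open>v c\<close> is handled by the induction hypothesis.\<close>

lemma column_reduction:
  fixes S :: "'a::comm_ring_1 mat" and f q :: "nat \<Rightarrow> 'a"
  assumes S: "S \<in> carrier_mat n n"
    and fq: "\<And>i. Suc i < n \<Longrightarrow> f (Suc i) = f i * q i"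
    and bezout: "\<And>i. Suc i < n \<Longrightarrow> \<exists>u v. u * det (trailing_submat S (Suc i)) + v * q i = 1"
    and i: "i < n"
  shows "\<exists>y. \<forall>a. i < a \<and> a < n \<longrightarrow> f a dvd f i * (c a + (\<Sum>j\<in>{Suc i..<n}. S $$ (a,j) * y j))"
  using i
proof (induction "n - Suc i" arbitrary: i c)
  case 0
  then show ?case by auto
next
  case (Suc d)
  define k where "k = Suc i"
  have k: "k < n" using Suc(2) k_def by simp
  define A where "A = trailing_submat S k"
  have A: "A \<in> carrier_mat (n-k) (n-k)" unfolding A_def using trailing_submat_carrier[OF S] .
  obtain u v where uv: "u * det A + v * q i = 1" using bezout k unfolding A_def k_def by blast
  obtain z where z: "\<forall>a. k < a \<and> a < n \<longrightarrow>
      f a dvd f k * (v * c a + (\<Sum>j\<in>{Suc k..<n}. S $$ (a,j) * z j))"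
  proof -
    have "d = n - Suc k" using Suc(2) k_def by simp
    from Suc(1)[of k "\<lambda>a. v * c a", OF this k] show ?thesis using that by blast
  qed
  define w where "w = adj_mat A *\<^sub>v vec (n-k) (\<lambda>a. c (a + k))"
  have w: "w \<in> carrier_vec (n-k)" unfolding w_def using adj_mat(1)[OF A] by simp
  have Aw: "A *\<^sub>v w = det A \<cdot>\<^sub>v vec (n-k) (\<lambda>a. c (a + k))"
    unfolding w_def by (rule adj_mat_solves[OF A]) simp
  define y where "y j = - u * w $ (j - k) + q i * (if k < j then z j else 0)" for j
  show ?case
  proof (intro exI allI impI)
    fix a assume "i < a \<and> a < n"
    then have a: "k \<le> a" "a < n" unfolding k_def by auto
    have Sw: "(\<Sum>j\<in>{k..<n}. S $$ (a,j) * w $ (j-k)) = det A * c a"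
      using trailing_submat_mult_vec[OF S w a] Aw a unfolding A_def by simp
    have Sz: "(\<Sum>j\<in>{k..<n}. S $$ (a,j) * (if k < j then z j else 0)) = (\<Sum>j\<in>{Suc k..<n}. S $$ (a,j) * z j)"
      unfolding sum.atLeast_Suc_lessThan[OF k] by (auto intro!: sum.cong)
    have "(\<Sum>j\<in>{k..<n}. S $$ (a,j) * y j)
        = - u * (\<Sum>j\<in>{k..<n}. S $$ (a,j) * w $ (j-k))
          + q i * (\<Sum>j\<in>{k..<n}. S $$ (a,j) * (if k < j then z j else 0))"
      unfolding y_def sum_distrib_left sum.distrib[symmetric] by (rule sum.cong) (simp_all add: algebra_simps)
    also have "\<dots> = - u * det A * c a + q i * (\<Sum>j\<in>{Suc k..<n}. S $$ (a,j) * z j)"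
      using Sw Sz by simp
    finally have "c a + (\<Sum>j\<in>{k..<n}. S $$ (a,j) * y j)
        = (1 - u * det A) * c a + q i * (\<Sum>j\<in>{Suc k..<n}. S $$ (a,j) * z j)"
      by (simp add: algebra_simps)
    also have "1 - u * det A = v * q i" using uv by (simp add: algebra_simps)
    finally have "f i * (c a + (\<Sum>j\<in>{Suc i..<n}. S $$ (a,j) * y j))
        = f k * (v * c a + (\<Sum>j\<in>{Suc k..<n}. S $$ (a,j) * z j))"
      using fq k unfolding k_def by (simp add: algebra_simps)
    moreover have "f a dvd f k * (v * c a + (\<Sum>j\<in>{Suc k..<n}. S $$ (a,j) * z j))"
      using z a by (cases "a = k") auto
    ultimately show "f a dvd f i * (c a + (\<Sum>j\<in>{Suc i..<n}. S $$ (a,j) * y j))" by simp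
  qed
qed

lemma lower_unitriangular_column_reduction:
  fixes S :: "'a::comm_ring_1 mat" and f q :: "nat \<Rightarrow> 'a"
  assumes S: "S \<in> carrier_mat n n"
    and fq: "\<And>i. Suc i < n \<Longrightarrow> f (Suc i) = f i * q i"
    and bezout: "\<And>i. Suc i < n \<Longrightarrow> \<exists>u v. u * det (trailing_submat S (Suc i)) + v * q i = 1"
  obtains M where "M \<in> carrier_mat n n" "lower_unitriangular M"
    "\<And>a b. b < a \<Longrightarrow> a < n \<Longrightarrow> f a dvd f b * (S * M) $$ (a,b)"
proof -
  have "\<exists>y. \<forall>a. b < a \<and> a < n \<longrightarrow>
      f a dvd f b * (S $$ (a,b) + (\<Sum>j\<in>{Suc b..<n}. S $$ (a,j) * y j))" if "b < n" for b
    using column_reduction[where c = "\<lambda>a. S $$ (a,b)", OF S fq bezout that] .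
  then have "\<forall>b. \<exists>y. b < n \<longrightarrow> (\<forall>a. b < a \<and> a < n \<longrightarrow>
      f a dvd f b * (S $$ (a,b) + (\<Sum>j\<in>{Suc b..<n}. S $$ (a,j) * y j)))"
    by blast
  from choice[OF this] obtain Y where Y0: "\<forall>b. b < n \<longrightarrow> (\<forall>a. b < a \<and> a < n \<longrightarrow>
      f a dvd f b * (S $$ (a,b) + (\<Sum>j\<in>{Suc b..<n}. S $$ (a,j) * Y b j)))"
    by blast
  have Y: "f a dvd f b * (S $$ (a,b) + (\<Sum>j\<in>{Suc b..<n}. S $$ (a,j) * Y b j))"
    if "b < a" "a < n" for a b
    using Y0 less_trans[OF that] that by blast
  define M where "M = mat n n (\<lambda>(j,b). if j = b then 1 else if b < j then Y b j else 0)"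
  have Mc: "M \<in> carrier_mat n n" unfolding M_def by simp
  have "(S * M) $$ (a,b) = S $$ (a,b) + (\<Sum>j\<in>{Suc b..<n}. S $$ (a,j) * Y b j)"
    if a: "a < n" and b: "b < a" for a b
  proof -
    have "(S * M) $$ (a,b) = (\<Sum>j\<in>{0..<n}. S $$ (a,j) * M $$ (j,b))"
      using S Mc a b by (simp add: scalar_prod_def)
    also have "\<dots> = (\<Sum>j\<in>{0..<n}. (if j = b then S $$ (a,b) else 0)
        + (if j \<in> {Suc b..<n} then S $$ (a,j) * Y b j else 0))"
      by (rule sum.cong) (use a b in \<open>auto simp: M_def\<close>)
    also have "\<dots> = S $$ (a,b) + (\<Sum>j\<in>{0..<n} \<inter> {Suc b..<n}. S $$ (a,j) * Y b j)"
      by (simp only: sum.distrib sum.inter_restrict[OF finite_atLeastLessThan]) (use a b in simp)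
    also have "{0..<n} \<inter> {Suc b..<n} = {Suc b..<n}" by auto
    finally show ?thesis .
  qed
  moreover have "lower_unitriangular M" unfolding lower_unitriangular_def M_def by auto
  ultimately show ?thesis using that Mc Y by simp
qed

text \<open>The witness is \<open>H = (S M)\<^sup>-\<^sup>1\<close>, for which \<open>H S = M\<^sup>-\<^sup>1\<close>.\<close>

lemma G_Phi_lower_unitriangular_if_mult:
  assumes Phi: "Phi \<in> carrier_mat n n" and S: "S \<in> GL n"
    and M: "lower_unitriangular M" "M \<in> carrier_mat n n" and SM: "S * M \<in> G_Phi Phi"
  shows "\<exists>H \<in> G_Phi Phi. lower_unitriangular (H * S)"
proof -
  have Sc: "S \<in> carrier_mat n n" using S by (rule GL_carrier)
  obtain N where N: "N \<in> carrier_mat n n" "M * N = 1\<^sub>m n" "N * M = 1\<^sub>m n"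
    using lower_unitriangular_GL[OF M] by (rule GL_inverse)
  obtain T where T: "T \<in> carrier_mat n n" "S * T = 1\<^sub>m n" "T * S = 1\<^sub>m n"
    using S by (rule GL_inverse)
  have "(S * M) * (N * T) = 1\<^sub>m n" "(N * T) * (S * M) = 1\<^sub>m n"
    using mult_mat_inverses_one[OF Sc M(2) T(1) N(1) T(2) N(2)]
      mult_mat_inverses_one[OF N(1) T(1) M(2) Sc N(3) T(3)] by simp_all
  then have "N * T \<in> G_Phi Phi" using G_Phi_inverse[OF Phi SM] N T by simp
  moreover have "(N * T) * S = N" using N T Sc by simp
  ultimately show ?thesis using lower_unitriangular_inverse[OF M N(1,2)] by metis
qed

lemma gcd_one_imp_G_Phi_lower_unitriangular:
  fixes S Phi :: "'a::idom mat"
  assumes edr: "elementary_divisor_ring TYPE('a)" and S: "S \<in> GL n"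
    and Phi: "Phi \<in> carrier_mat n n" "is_d_matrix Phi" "det Phi \<noteq> 0"
    and coprime: "\<And>i. Suc i < n \<Longrightarrow>
      gcd_one (exact_quot (Phi $$ (Suc i, Suc i)) (Phi $$ (i, i))) (det (trailing_submat S (Suc i)))"
  shows "\<exists>H \<in> G_Phi Phi. lower_unitriangular (H * S)"
proof -
  have Sc: "S \<in> carrier_mat n n" using S by (rule GL_carrier)
  have D: "diagonal_mat Phi" using Phi(2) by (rule is_d_matrix_diagonal)
  define f where "f i = Phi $$ (i,i)" for i
  define q where "q i = exact_quot (f (Suc i)) (f i)" for i
  have f_dvd: "f a dvd f b" if "a \<le> b" "b < n" for a b
    unfolding f_def using is_d_matrix_index_dvd[OF Phi(2) that(1)] that Phi(1) by simp
  have fq: "f (Suc i) = f i * q i" if "Suc i < n" for i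
    unfolding q_def using that f_dvd diagonal_index_nonzero[OF Phi(1) D Phi(3), of i]
    by (simp add: exact_quot_mult f_def)
  have bezout: "\<exists>u v. u * det (trailing_submat S (Suc i)) + v * q i = 1" if "Suc i < n" for i
    using edr_bezout[OF edr coprime[OF that]] unfolding q_def f_def by (metis add.commute)
  obtain M where M: "M \<in> carrier_mat n n" "lower_unitriangular M"
    and reduced: "\<And>a b. b < a \<Longrightarrow> a < n \<Longrightarrow> f a dvd f b * (S * M) $$ (a,b)"
    using lower_unitriangular_column_reduction[where f = f and q = q, OF Sc fq bezout] by blast
  have "S * M \<in> G_Phi Phi"
  proof (rule G_PhiI[OF Phi(1) D Phi(3) GL_mult[OF S lower_unitriangular_GL[OF M(2,1)]]])
    fix a b assume "a < n" "b < n"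
    then show "Phi $$ (a,a) dvd (S * M) $$ (a,b) * Phi $$ (b,b)"
      using reduced f_dvd[of a b] unfolding f_def
      by (cases "b < a") (auto simp: mult.commute)
  qed
  then show ?thesis using G_Phi_lower_unitriangular_if_mult[OF Phi(1) S M(2,1)] by blast
qed

theorem theorem2p8:
  fixes S Phi :: "'a :: idom mat" and n :: nat
  assumes "elementary_divisor_ring TYPE('a)"
    and "S \<in> GL n"
    and "Phi \<in> carrier_mat n n"
    and "is_d_matrix Phi"
    and "det Phi \<noteq> 0"
  shows "(\<exists>H \<in> G_Phi Phi. lower_unitriangular (H * S)) \<longleftrightarrow>
    (\<forall>i. Suc i < n \<longrightarrow>
       gcd_one (exact_quot (Phi $$ (Suc i, Suc i)) (Phi $$ (i, i)))
               (det (trailing_submat S (Suc i))))"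
proof
  assume "\<exists>H \<in> G_Phi Phi. lower_unitriangular (H * S)"
  then show "\<forall>i. Suc i < n \<longrightarrow>
      gcd_one (exact_quot (Phi $$ (Suc i, Suc i)) (Phi $$ (i, i))) (det (trailing_submat S (Suc i)))"
    using G_Phi_lower_unitriangular_imp_gcd_one[OF GL_carrier[OF assms(2)] assms(3-5)] by blast
qed (use gcd_one_imp_G_Phi_lower_unitriangular[OF assms] in blast)

end
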